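(* Let $\lambda\in(\frac16,\frac56)$ and $x\in[0,1]\setminus\mathcal E$. Suppose there is a finite $p\ge0$ with $\beta_{1,2}(x,p)=0$ and $\beta_{1,2}(x,p+1)=1$. Then $m_0(x)=\dots=m_p(x)=0$, $m_{p+1}(x)=6\lambda$ if $u_p(x)=1$ and $m_{p+1}(x)=-6\lambda$ if $u_p(x)=2$, and for all $n\ge p+1$: $m_{n+1}(x)=m_n(x)$ if $u_n(x)\in\{0,3\}$; $m_{n+1}(x)=\mathrm{sgn}(m_n(x))\big(|m_n(x)|+6\lambda\sqrt{1+m_n(x)^2}\big)$ if $u_n(x)=1$; $m_{n+1}(x)=\mathrm{sgn}(m_n(x))\big(|m_n(x)|-6\lambda\sqrt{1+m_n(x)^2}\big)$ if $u_n(x)=2$.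
   Context: Construction: $F^\lambda_0\equiv0$ on $[0,1]$ (one interval of generation $0$). Given $F^\lambda_n$ with its $4^n$ closed intervals of generation $n$ (covering $[0,1]$, disjoint interiors, $F^\lambda_n$ affine on each), on each interval $[a,b]$ of generation $n$, with $\ell=b-a$ and slope $m$, $F^\lambda_{n+1}$ coincides with $F^\lambda_n$ at $a,a+\ell/3,a+2\ell/3,b$, equals $F^\lambda_n(a+\ell/2)+\lambda\ell\sqrt{1+m^2}$ at $a+\ell/2$, and is affine on $[a,a+\ell/3],[a+\ell/3,a+\ell/2],[a+\ell/2,a+2\ell/3],[a+2\ell/3,b]$. Dynamics: $T(x)=3x$ on $[0,\frac13)$, $6x-2$ on $[\frac13,\frac12)$, $4-6x$ on $[\frac12,\frac23)$, $3x-2$ on $[\frac23,1]$; $U(x)=0,1,2,3$ on these intervals respectively; $u_n(x)=U(T^nx)$; $\beta_i(x,n)=\#\{k<n:u_k(x)=i\}$, $\beta_{1,2}=\beta_1+\beta_2$. $\mathcal E$ is the set of $x$ whose digit sequence $(u_n(x))$ is eventually constantly $0$ or eventually constantly $3$; for $x\notin\mathcal E$, $F^\lambda_n$ is differentiable at $x$ and $m_n(x)$ is its slope at $x$. *)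

theory Defs
  imports "HOL-Analysis.Analysis"
begin

text \<open>The graph of F^lam_n is represented by its list of knots (x, F(x)), sorted from 0 to 1.
  One refinement step replaces every interval [a,b] of generation n (consecutive knots) by the
  four intervals of generation n+1, with new knot values as in the construction.\<close>

fun refine :: "real \<Rightarrow> (real \<times> real) list \<Rightarrow> (real \<times> real) list" where
  "refine lam ((a, fa) # (b, fb) # rest) =
     (let l = b - a; m = (fb - fa) / l in
        (a, fa) # (a + l/3, fa + m * (l/3))
        # (a + l/2, fa + m * (l/2) + lam * l * sqrt (1 + m\<^sup>2))
        # (a + 2*l/3, fa + m * (2*l/3))
        # refine lam ((b, fb) # rest))"
| "refine lam [p] = [p]"
| "refine lam [] = []"

definition knots :: "real \<Rightarrow> nat \<Rightarrow> (real \<times> real) list" where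
  "knots lam n = (refine lam ^^ n) [(0, 0), (1, 0)]"

fun pl_interp :: "(real \<times> real) list \<Rightarrow> real \<Rightarrow> real" where
  "pl_interp ((a, fa) # (b, fb) # rest) y =
     (if y \<le> b then fa + (fb - fa) / (b - a) * (y - a) else pl_interp ((b, fb) # rest) y)"
| "pl_interp [(a, fa)] y = fa"
| "pl_interp [] y = 0"

definition F :: "real \<Rightarrow> nat \<Rightarrow> real \<Rightarrow> real" where
  "F lam n = pl_interp (knots lam n)"

definition slope :: "real \<Rightarrow> nat \<Rightarrow> real \<Rightarrow> real" where
  "slope lam n x = deriv (F lam n) x"

definition T :: "real \<Rightarrow> real" where
  "T x = (if x < 1/3 then 3*x else if x < 1/2 then 6*x - 2 else if x < 2/3 then 4 - 6*x else 3*x - 2)"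

definition U :: "real \<Rightarrow> nat" where
  "U x = (if x < 1/3 then 0 else if x < 1/2 then 1 else if x < 2/3 then 2 else 3)"

definition u :: "nat \<Rightarrow> real \<Rightarrow> nat" where
  "u n x = U ((T ^^ n) x)"

definition beta :: "nat \<Rightarrow> real \<Rightarrow> nat \<Rightarrow> nat" where
  "beta i x n = card {k. k < n \<and> u k x = i}"

definition beta12 :: "real \<Rightarrow> nat \<Rightarrow> nat" where
  "beta12 x n = beta 1 x n + beta 2 x n"

definition Ecal :: "real set" where
  "Ecal = {x. \<exists>N. \<forall>n\<ge>N. u n x = 0} \<union> {x. \<exists>N. \<forall>n\<ge>N. u n x = 3}"

end

theory Submission
  imports Defs
begin

text \<open>Follow the interval of generation \<open>n\<close> that contains \<open>x\<close>. If its slope is \<open>m\<close> and \<open>x\<close> sits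
  at relative position \<open>r\<close> in it, the child interval containing \<open>x\<close> has relative position
  \<open>sawtooth r\<close> and slope \<open>m + bump (U r) * 6\<lambda>\<surd>(1 + m\<^sup>2)\<close>: the spike of height \<open>\<lambda>l\<surd>(1 + m\<^sup>2)\<close>
  sits over a half-width \<open>l/6\<close>. For \<open>\<lambda> > 1/6\<close> this increment exceeds \<open>|m|\<close>, so the descending
  flank turns a nonnegative slope negative and the ascending flank turns a negative slope
  positive. As \<open>T\<close> is the sawtooth folded on \<open>[1/2, 2/3)\<close>, induction shows \<open>r = T\<^sup>n x\<close> when
  \<open>m \<ge> 0\<close> and \<open>r = 1 - T\<^sup>n x\<close> when \<open>m < 0\<close>; the digit of \<open>r\<close> is then \<open>u\<^sub>n x\<close> or its mirror
  \<open>3 - u\<^sub>n x\<close>, which is the stated recursion. Slopes vanish up to the first digit 1 or 2 and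
  never vanish afterwards. The hypothesis \<open>x \<notin> Ecal\<close> keeps \<open>T\<^sup>n x\<close> off \<open>0\<close>, \<open>1\<close> and the cut points.\<close>

lemma refine_Cons: "\<exists>zs. refine lam (q # ks) = q # zs"
  by (cases q; cases ks) (auto simp: Let_def)

lemma refine_append: "\<exists>zs. refine lam (xs @ q # ys) = zs @ refine lam (q # ys)"
proof (induction xs)
  case (Cons c xs)
  obtain d ds where d: "xs @ q # ys = d # ds"
    by (cases "xs @ q # ys") auto
  obtain p1 p2 p3 where "refine lam (c # d # ds) = [c, p1, p2, p3] @ refine lam (d # ds)"
    by (cases c; cases d) (simp add: Let_def)
  with Cons d show ?case
    by (metis append.assoc append_Cons)
qed simp

lemma sorted_refine:
  "sorted_wrt (<) (map fst ks) \<Longrightarrow> sorted_wrt (<) (map fst (refine lam ks))"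
proof (induction lam ks rule: refine.induct)
  case (1 lam a fa b fb rest)
  obtain zs where zs: "refine lam ((b, fb) # rest) = (b, fb) # zs"
    using refine_Cons by blast
  have "a < b" and "sorted_wrt (<) (map fst ((b, fb) # rest))"
    using "1.prems" by auto
  then have "sorted_wrt (<) (map fst ((b, fb) # zs))" and "a < b"
    using "1.IH" zs by (auto simp: Let_def)
  then show ?case
    using zs by (auto simp: Let_def field_simps)
qed auto

lemma knots_Suc: "knots lam (Suc n) = refine lam (knots lam n)"
  by (simp add: knots_def)

lemma sorted_knots: "sorted_wrt (<) (map fst (knots lam n))"
  by (induction n) (simp_all add: knots_def sorted_refine)

definition consecutive_knots :: "(real \<times> real) list \<Rightarrow> real \<Rightarrow> real \<Rightarrow> real \<Rightarrow> real \<Rightarrow> bool" where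
  "consecutive_knots ks a fa b fb \<longleftrightarrow> (\<exists>xs ys. ks = xs @ (a, fa) # (b, fb) # ys)"

lemma consecutive_knots_intro: "consecutive_knots (xs @ (a, fa) # (b, fb) # ys) a fa b fb"
  by (auto simp: consecutive_knots_def)

lemma consecutive_knots_0: "consecutive_knots (knots lam 0) 0 0 1 0"
  using consecutive_knots_intro[of "[]" 0 0 1 0 "[]"] by (simp add: knots_def)

lemma refine_consecutive:
  assumes "consecutive_knots ks a fa b fb"
  defines "l \<equiv> b - a" and "m \<equiv> (fb - fa) / (b - a)"
  shows "\<exists>zs ws. refine lam ks = zs @ (a, fa) # (a + l/3, fa + m * (l/3))
           # (a + l/2, fa + m * (l/2) + lam * l * sqrt (1 + m\<^sup>2))
           # (a + 2*l/3, fa + m * (2*l/3)) # (b, fb) # ws"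
proof -
  obtain xs ys where ks: "ks = xs @ (a, fa) # (b, fb) # ys"
    using assms(1) by (auto simp: consecutive_knots_def)
  obtain zs where zs: "refine lam ks = zs @ refine lam ((a, fa) # (b, fb) # ys)"
    using refine_append unfolding ks by blast
  obtain ws where ws: "refine lam ((b, fb) # ys) = (b, fb) # ws"
    using refine_Cons by blast
  have "refine lam ((a, fa) # (b, fb) # ys) = (a, fa) # (a + l/3, fa + m * (l/3))
           # (a + l/2, fa + m * (l/2) + lam * l * sqrt (1 + m\<^sup>2))
           # (a + 2*l/3, fa + m * (2*l/3)) # refine lam ((b, fb) # ys)"
    by (simp only: refine.simps Let_def l_def m_def)
  with zs ws show ?thesis
    by auto
qed

lemma pl_interp_consecutive:
  assumes "sorted_wrt (<) (map fst (xs @ (a, fa) # (b, fb) # ys))" "a < y" "y \<le> b"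
  shows "pl_interp (xs @ (a, fa) # (b, fb) # ys) y = fa + (fb - fa) / (b - a) * (y - a)"
  using assms(1)
proof (induction xs)
  case (Cons c xs)
  obtain d ds where d: "xs @ (a, fa) # (b, fb) # ys = d # ds"
    by (cases "xs @ (a, fa) # (b, fb) # ys") auto
  have "fst d \<le> a"
    using Cons.prems d by (cases xs) auto
  then have "pl_interp (c # d # ds) y = pl_interp (d # ds) y"
    using assms(2) by (cases c; cases d) auto
  then show ?case
    using Cons d by simp
qed (use assms in simp)

lemma slope_consecutive:
  assumes "consecutive_knots (knots lam n) a fa b fb" "a < x" "x < b"
  shows "slope lam n x = (fb - fa) / (b - a)"
proof -
  have F_eq: "F lam n y = fa + (fb - fa) / (b - a) * (y - a)" if "y \<in> {a<..<b}" for y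
    using assms(1) sorted_knots[of lam n] pl_interp_consecutive that
    by (auto simp: F_def consecutive_knots_def)
  have "((\<lambda>y. fa + (fb - fa) / (b - a) * (y - a)) has_real_derivative (fb - fa) / (b - a)) (at x)"
    using assms by (auto intro!: derivative_eq_intros)
  then have "(F lam n has_real_derivative (fb - fa) / (b - a)) (at x)"
    by (rule has_field_derivative_transform_within_open[where S = "{a<..<b}"])
       (use assms F_eq in auto)
  then show ?thesis
    unfolding slope_def by (rule DERIV_imp_deriv)
qed

text \<open>Relative position in the child interval, as a function of the relative position \<open>r\<close> in
  the parent interval; it agrees with \<open>T\<close> except on \<open>[1/2, 2/3)\<close>, where \<open>T\<close> is folded.\<close>
definition sawtooth :: "real \<Rightarrow> real" where
  "sawtooth r = (if r < 1/3 then 3*r else if r < 1/2 then 6*r - 2 else if r < 2/3 then 6*r - 3 else 3*r - 2)"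

definition bump :: "nat \<Rightarrow> real" where
  "bump d = (if d = 1 then 1 else if d = 2 then -1 else 0)"

lemma refine_segment:
  fixes lam a fa b fb x :: real
  defines "m \<equiv> (fb - fa) / (b - a)" and "r \<equiv> (x - a) / (b - a)"
  assumes "consecutive_knots (knots lam n) a fa b fb" "a < x" "x < b"
    and r_not_cut: "r \<notin> {1/3, 1/2, 2/3}"
  shows "\<exists>a' fa' b' fb'. consecutive_knots (knots lam (Suc n)) a' fa' b' fb' \<and> a' < x \<and> x < b'
     \<and> (fb' - fa') / (b' - a') = m + bump (U r) * (6 * lam * sqrt (1 + m\<^sup>2))
     \<and> (x - a') / (b' - a') = sawtooth r"
proof -
  define l where "l = b - a"
  define s where "s = sqrt (1 + m\<^sup>2)"
  have l: "0 < l"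
    using assms by (simp add: l_def)
  obtain zs ws where ks: "knots lam (Suc n) = zs @ (a, fa) # (a + l/3, fa + m * (l/3))
      # (a + l/2, fa + m * (l/2) + lam * l * s) # (a + 2*l/3, fa + m * (2*l/3)) # (b, fb) # ws"
    using refine_consecutive[OF assms(3), of lam] unfolding knots_Suc l_def m_def s_def by blast
  have x: "x = a + r * l" and r: "0 < r" "r < 1" and b: "b = a + l" "fb = fa + m * l"
    using assms l by (auto simp: l_def m_def r_def field_simps)
  consider "r < 1/3" | "1/3 < r" "r < 1/2" | "1/2 < r" "r < 2/3" | "2/3 < r"
    using r_not_cut by fastforce
  then show ?thesis
  proof cases
    case 1
    have "consecutive_knots (knots lam (Suc n)) a fa (a + l/3) (fa + m * (l/3))"
      using consecutive_knots_intro[of zs] unfolding ks by simp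
    then show ?thesis
      by (intro exI conjI, assumption)
         (use l r 1 in \<open>auto simp: x b s_def bump_def U_def sawtooth_def field_simps\<close>)
  next
    case 2
    have "consecutive_knots (knots lam (Suc n)) (a + l/3) (fa + m * (l/3))
        (a + l/2) (fa + m * (l/2) + lam * l * s)"
      using consecutive_knots_intro[of "zs @ [(a, fa)]"] unfolding ks by simp
    then show ?thesis
      by (intro exI conjI, assumption)
         (use l r 2 in \<open>auto simp: x b s_def bump_def U_def sawtooth_def field_simps\<close>)
  next
    case 3
    have "consecutive_knots (knots lam (Suc n)) (a + l/2) (fa + m * (l/2) + lam * l * s)
        (a + 2*l/3) (fa + m * (2*l/3))"
      using consecutive_knots_intro[of "zs @ [(a, fa), (a + l/3, fa + m * (l/3))]"] unfolding ks by simp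
    then show ?thesis
      by (intro exI conjI, assumption)
         (use l r 3 in \<open>auto simp: x b s_def bump_def U_def sawtooth_def field_simps\<close>)
  next
    case 4
    have "consecutive_knots (knots lam (Suc n)) (a + 2*l/3) (fa + m * (2*l/3)) b fb"
      using consecutive_knots_intro[of "zs @ [(a, fa), (a + l/3, fa + m * (l/3)),
          (a + l/2, fa + m * (l/2) + lam * l * s)]"] unfolding ks by simp
    then show ?thesis
      by (intro exI conjI, assumption)
         (use l r 4 in \<open>auto simp: x b s_def bump_def U_def sawtooth_def field_simps\<close>)
  qed
qed

lemma T_0 [simp]: "T 0 = 0" and T_1 [simp]: "T 1 = 1"
  by (simp_all add: T_def)

lemma funpow_T_unit_interval: "x \<in> {0..1} \<Longrightarrow> (T ^^ n) x \<in> {0..1}"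
  by (induction n) (auto simp: T_def)

lemma funpow_T_fixed:
  assumes "(T ^^ n) x = c" "c \<in> {0, 1}" "n \<le> k"
  shows "(T ^^ k) x = c"
  using assms(3) by (induction k rule: dec_induct) (use assms in auto)

lemma funpow_T_not_0_1:
  assumes "x \<notin> Ecal"
  shows "(T ^^ n) x \<notin> {0, 1}"
proof
  assume c: "(T ^^ n) x \<in> {0, 1}"
  have "u k x = U ((T ^^ n) x)" if "n \<le> k" for k
    using funpow_T_fixed[OF refl c that] by (simp add: u_def)
  moreover have "U ((T ^^ n) x) \<in> {0, 3}"
    using c by (auto simp: U_def)
  ultimately have "(\<forall>k\<ge>n. u k x = 0) \<or> (\<forall>k\<ge>n. u k x = 3)"
    by auto
  then have "x \<in> Ecal"
    unfolding Ecal_def by blast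
  with assms show False ..
qed

lemma funpow_T_avoids_cuts:
  assumes "x \<in> {0..1}" "x \<notin> Ecal"
  shows "(T ^^ n) x \<in> {0<..<1} - {1/3, 1/2, 2/3}"
  \<comment> \<open>\<open>T\<close> maps the cut points to \<open>0\<close> or \<open>1\<close>, which the next iterate avoids.\<close>
  using funpow_T_unit_interval[OF assms(1), of n] funpow_T_not_0_1[OF assms(2), of n]
    funpow_T_not_0_1[OF assms(2), of "Suc n"]
  by (auto simp: T_def)

definition orient :: "real \<Rightarrow> real \<Rightarrow> real" where
  "orient m t = (if m < 0 then 1 - t else t)"

lemma bump_U_orient:
  "t \<in> {0<..<1} - {1/3, 1/2, 2/3} \<Longrightarrow> bump (U (orient m t)) = (if m < 0 then -1 else 1) * bump (U t)"
  by (auto simp: bump_def U_def orient_def)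

lemma sawtooth_orient:
  assumes "t \<in> {0<..<1} - {1/3, 1/2, 2/3}" "\<bar>m\<bar> < K"
  shows "sawtooth (orient m t) = orient (m + bump (U (orient m t)) * K) (T t)"
proof -
  consider "t < 1/3" | "1/3 < t" "t < 1/2" | "1/2 < t" "t < 2/3" | "2/3 < t"
    using assms(1) by fastforce
  then show ?thesis
    by cases (use assms in \<open>(cases "m < 0"; simp add: sawtooth_def orient_def bump_def U_def T_def)+\<close>)
qed

lemma abs_less_slope_increment:
  fixes lam m :: real
  assumes "1/6 < lam"
  shows "\<bar>m\<bar> < 6 * lam * sqrt (1 + m\<^sup>2)"
proof -
  have "\<bar>m\<bar> < sqrt (1 + m\<^sup>2)"
    using real_sqrt_less_mono[of "m\<^sup>2" "1 + m\<^sup>2"] by simp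
  also have "\<dots> = 1 * sqrt (1 + m\<^sup>2)"
    by simp
  also have "\<dots> < 6 * lam * sqrt (1 + m\<^sup>2)"
    using assms by (intro mult_strict_right_mono) (auto intro: add_pos_nonneg)
  finally show ?thesis .
qed

lemma orbit_segment_Suc:
  fixes lam a fa b fb x :: real
  defines "m \<equiv> (fb - fa) / (b - a)"
  assumes "1/6 < lam" "x \<in> {0..1}" "x \<notin> Ecal"
    and seg: "consecutive_knots (knots lam n) a fa b fb" "a < x" "x < b"
    and pos: "(x - a) / (b - a) = orient m ((T ^^ n) x)"
  shows "\<exists>a' fa' b' fb'. consecutive_knots (knots lam (Suc n)) a' fa' b' fb' \<and> a' < x \<and> x < b'
     \<and> (fb' - fa') / (b' - a') = m + bump (U (orient m ((T ^^ n) x))) * (6 * lam * sqrt (1 + m\<^sup>2))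
     \<and> (x - a') / (b' - a') = orient ((fb' - fa') / (b' - a')) ((T ^^ Suc n) x)"
proof -
  define t where "t = (T ^^ n) x"
  have t: "t \<in> {0<..<1} - {1/3, 1/2, 2/3}"
    using funpow_T_avoids_cuts[OF assms(3,4)] by (simp add: t_def)
  then have "(x - a) / (b - a) \<notin> {1/3, 1/2, 2/3}"
    using pos by (auto simp: orient_def t_def)
  then obtain a' fa' b' fb' where seg': "consecutive_knots (knots lam (Suc n)) a' fa' b' fb'" "a' < x" "x < b'"
    and m': "(fb' - fa') / (b' - a') = m + bump (U (orient m t)) * (6 * lam * sqrt (1 + m\<^sup>2))"
    and pos': "(x - a') / (b' - a') = sawtooth (orient m t)"
    using refine_segment[OF seg] unfolding pos m_def[symmetric] t_def[symmetric] by blast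
  have "sawtooth (orient m t) = orient (m + bump (U (orient m t)) * (6 * lam * sqrt (1 + m\<^sup>2))) (T t)"
    using sawtooth_orient[OF t abs_less_slope_increment[OF assms(2)]] .
  then have "(x - a') / (b' - a') = orient ((fb' - fa') / (b' - a')) ((T ^^ Suc n) x)"
    using m' pos' by (simp add: t_def)
  with seg' m' show ?thesis
    unfolding t_def by blast
qed

lemma orbit_segment:
  assumes "1/6 < lam" "x \<in> {0..1}" "x \<notin> Ecal"
  shows "\<exists>a fa b fb. consecutive_knots (knots lam n) a fa b fb \<and> a < x \<and> x < b
           \<and> (x - a) / (b - a) = orient ((fb - fa) / (b - a)) ((T ^^ n) x)"
proof (induction n)
  case 0
  have "0 < x" "x < 1"
    using funpow_T_avoids_cuts[OF assms(2,3), of 0] by auto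
  with consecutive_knots_0 show ?case
    by (intro exI[of _ 0] exI[of _ 0] exI[of _ 1] exI[of _ 0]) (simp add: orient_def)
next
  case (Suc n)
  then show ?case
    using orbit_segment_Suc[OF assms] by blast
qed

lemma slope_0: "x \<in> {0<..<1} \<Longrightarrow> slope lam 0 x = 0"
  using slope_consecutive[OF consecutive_knots_0] by simp

lemma slope_Suc:
  assumes "1/6 < lam" "x \<in> {0..1}" "x \<notin> Ecal"
  shows "slope lam (Suc n) x = slope lam n x
           + (if slope lam n x < 0 then -1 else 1) * (bump (u n x) * (6 * lam * sqrt (1 + (slope lam n x)\<^sup>2)))"
proof -
  obtain a fa b fb where seg: "consecutive_knots (knots lam n) a fa b fb" "a < x" "x < b"
    and pos: "(x - a) / (b - a) = orient ((fb - fa) / (b - a)) ((T ^^ n) x)"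
    using orbit_segment[OF assms] by blast
  define m where "m = (fb - fa) / (b - a)"
  have m: "slope lam n x = m"
    using slope_consecutive[OF seg] by (simp add: m_def)
  obtain a' fa' b' fb' where seg': "consecutive_knots (knots lam (Suc n)) a' fa' b' fb'" "a' < x" "x < b'"
    and m': "(fb' - fa') / (b' - a') = m + bump (U (orient m ((T ^^ n) x))) * (6 * lam * sqrt (1 + m\<^sup>2))"
    using orbit_segment_Suc[OF assms seg pos] unfolding m_def by blast
  have "slope lam (Suc n) x = m + bump (U (orient m ((T ^^ n) x))) * (6 * lam * sqrt (1 + m\<^sup>2))"
    using slope_consecutive[OF seg'] m' by simp
  then show ?thesis
    unfolding m bump_U_orient[OF funpow_T_avoids_cuts[OF assms(2,3)]] by (simp add: u_def)
qed

lemma slope_Suc_sgn: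
  assumes "1/6 < lam" "x \<in> {0..1}" "x \<notin> Ecal" "slope lam n x \<noteq> 0"
  shows "slope lam (Suc n) x = sgn (slope lam n x)
           * (\<bar>slope lam n x\<bar> + bump (u n x) * (6 * lam * sqrt (1 + (slope lam n x)\<^sup>2)))"
  using slope_Suc[OF assms(1-3), of n] assms(4) by (simp add: sgn_if)

lemma slope_Suc_nonzero:
  assumes "1/6 < lam" "x \<in> {0..1}" "x \<notin> Ecal" "slope lam n x \<noteq> 0"
  shows "slope lam (Suc n) x \<noteq> 0"
proof -
  define m where "m = slope lam n x"
  have "\<bar>m\<bar> < 6 * lam * sqrt (1 + m\<^sup>2)"
    using abs_less_slope_increment[OF assms(1)] .
  then have "\<bar>m\<bar> + bump (u n x) * (6 * lam * sqrt (1 + m\<^sup>2)) \<noteq> 0"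
    using assms(4) by (auto simp: bump_def m_def)
  then show ?thesis
    using slope_Suc_sgn[OF assms] assms(4) by (simp add: m_def sgn_if)
qed

lemma slope_nonzero_persists:
  assumes "1/6 < lam" "x \<in> {0..1}" "x \<notin> Ecal" "slope lam n x \<noteq> 0" "n \<le> k"
  shows "slope lam k x \<noteq> 0"
  using assms(5) by (induction k rule: dec_induct) (use assms slope_Suc_nonzero in blast)+

lemma slope_eq_0_before_middle_digit:
  assumes "1/6 < lam" "x \<in> {0..1}" "x \<notin> Ecal" "\<forall>j<k. u j x \<notin> {1, 2}"
  shows "slope lam k x = 0"
  using assms(4)
proof (induction k)
  case 0
  show ?case
    using funpow_T_avoids_cuts[OF assms(2,3), of 0] by (simp add: slope_0)
next
  case (Suc k)
  then show ?case
    using slope_Suc[OF assms(1-3), of k] by (simp add: bump_def)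
qed

lemma beta_Suc: "beta i x (Suc n) = beta i x n + (if u n x = i then 1 else 0)"
proof -
  have "{k. k < Suc n \<and> u k x = i} = {k. k < n \<and> u k x = i} \<union> (if u n x = i then {n} else {})"
    by (auto simp: less_Suc_eq)
  then show ?thesis
    unfolding beta_def by (auto simp: card_insert_if)
qed

lemma beta12_0 [simp]: "beta12 x 0 = 0"
  by (simp add: beta12_def beta_def)

lemma beta12_Suc: "beta12 x (Suc n) = beta12 x n + (if u n x \<in> {1, 2} then 1 else 0)"
  by (auto simp: beta12_def beta_Suc)

lemma beta12_eq_0_iff: "beta12 x n = 0 \<longleftrightarrow> (\<forall>k<n. u k x \<notin> {1, 2})"
  by (induction n) (auto simp: beta12_Suc less_Suc_eq)

theorem lemma3p3:
  fixes lam x :: real and p :: nat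
  assumes "1/6 < lam" and "lam < 5/6"
    and "x \<in> {0..1}" and "x \<notin> Ecal"
    and "beta12 x p = 0" and "beta12 x (Suc p) = 1"
  shows "(\<forall>k\<le>p. slope lam k x = 0)
    \<and> (u p x = 1 \<longrightarrow> slope lam (Suc p) x = 6 * lam)
    \<and> (u p x = 2 \<longrightarrow> slope lam (Suc p) x = - 6 * lam)
    \<and> (\<forall>n\<ge>Suc p.
         (u n x \<in> {0, 3} \<longrightarrow> slope lam (Suc n) x = slope lam n x)
       \<and> (u n x = 1 \<longrightarrow> slope lam (Suc n) x =
            sgn (slope lam n x) * (\<bar>slope lam n x\<bar> + 6 * lam * sqrt (1 + (slope lam n x)\<^sup>2)))
       \<and> (u n x = 2 \<longrightarrow> slope lam (Suc n) x =
            sgn (slope lam n x) * (\<bar>slope lam n x\<bar> - 6 * lam * sqrt (1 + (slope lam n x)\<^sup>2))))"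
proof -
  have digits: "\<forall>k<p. u k x \<notin> {1, 2}"
    using assms(5) by (simp add: beta12_eq_0_iff)
  have digit_p: "u p x \<in> {1, 2}"
    using beta12_Suc[of x p] assms(5,6) by (cases "u p x \<in> {1, 2}") simp_all
  have flat: "\<forall>k\<le>p. slope lam k x = 0"
    using slope_eq_0_before_middle_digit[OF assms(1,3,4)] digits by simp
  have first: "slope lam (Suc p) x = bump (u p x) * 6 * lam"
    using slope_Suc[OF assms(1,3,4), of p] flat by simp
  have "slope lam n x \<noteq> 0" if "Suc p \<le> n" for n
    using slope_nonzero_persists[OF assms(1,3,4) _ that] first digit_p assms(1)
    by (auto simp: bump_def)
  then have "slope lam (Suc n) x = sgn (slope lam n x)
           * (\<bar>slope lam n x\<bar> + bump (u n x) * (6 * lam * sqrt (1 + (slope lam n x)\<^sup>2)))"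
    if "Suc p \<le> n" for n
    using slope_Suc_sgn[OF assms(1,3,4)] that by blast
  then show ?thesis
    using flat first by (simp add: bump_def sgn_mult_abs)
qed

end
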